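(* For given cardinality vectors $\boldsymbol\varrho,\boldsymbol\varphi,\boldsymbol\psi$ and any receiver $i$ with $\psi_i\ge1$, the expected primary degree $\Delta_i$ of any vertex induced by receiver $i$ equals \[ \mathbb E[\Delta_i]=\sum_{k=1,k\ne i}^M\frac{\psi_k}{N}\Big(1+\frac{\varrho_k\varrho_i}{N-1}\Big). \]
   Context: A sender holds a frame $\mathcal N$ of $N\ge2$ packets and serves receivers $\mathcal M=\{1,\dots,M\}$. For each receiver $i$ there are sets $\mathcal H_i\subseteq\mathcal N$ (Has set), $\mathcal L_i=\mathcal N\setminus\mathcal H_i$ (Lacks set) and $\mathcal W_i\subseteq\mathcal L_i$ (Wants set), with cardinalities $\varrho_i=|\mathcal H_i|$, $\varphi_i=N-\varrho_i$, $\psi_i=|\mathcal W_i|$. The primary IDNC graph $\mathcal G_\rho$ has a vertex $v_{ij}$ for every receiver $i$ and every $j\in\mathcal W_i$; two distinct vertices $v_{ij},v_{kl}$ are adjacent iff (C1) $j=l$, or (C2) $j\in\mathcal H_k$ and $l\in\mathcal H_i$. The primary degree of a vertex is its degree in $\mathcal G_\rho$. Expectations are taken in the model that ignores set contents: given the cardinalities, the pairs $(\mathcal H_k,\mathcal W_k)$, $k\in\mathcal M$, are independent, $\mathcal H_k$ is a uniformly random $\varrho_k$-element subset of $\mathcal N$, and given $\mathcal H_k$, $\mathcal W_k$ is a uniformly random $\psi_k$-element subset of $\mathcal N\setminus\mathcal H_k$. The expected primary degree of a vertex induced by receiver $i$ means the expected degree of $v_{ij}$ conditioned on $j\in\mathcal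 W_i$, for a fixed packet $j$. *)

theory Defs
  imports "HOL-Probability.Probability"
begin

text \<open>Packets are \<open>{1..N}\<close>, receivers are \<open>{1..M}\<close>. A configuration assigns to every
receiver k the pair (Has set, Wants set) = (H k, W k).\<close>

type_synonym config = "nat \<Rightarrow> nat set \<times> nat set"

definition Has :: "config \<Rightarrow> nat \<Rightarrow> nat set" where
  "Has c k = fst (c k)"

definition Wants :: "config \<Rightarrow> nat \<Rightarrow> nat set" where
  "Wants c k = snd (c k)"

definition idnc_vertices :: "nat \<Rightarrow> config \<Rightarrow> (nat \<times> nat) set" where
  "idnc_vertices M c = {(k, l). k \<in> {1..M} \<and> l \<in> Wants c k}"

definition idnc_adj :: "config \<Rightarrow> nat \<times> nat \<Rightarrow> nat \<times> nat \<Rightarrow> bool" where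
  "idnc_adj c v u \<longleftrightarrow> v \<noteq> u \<and>
     (snd v = snd u \<or> (snd v \<in> Has c (fst u) \<and> snd u \<in> Has c (fst v)))"

definition primary_degree :: "nat \<Rightarrow> config \<Rightarrow> nat \<times> nat \<Rightarrow> nat" where
  "primary_degree M c v = card {u \<in> idnc_vertices M c. idnc_adj c v u}"

definition receiver_pmf :: "nat \<Rightarrow> nat \<Rightarrow> nat \<Rightarrow> (nat set \<times> nat set) pmf" where
  "receiver_pmf N rho psi =
     bind_pmf (pmf_of_set {H. H \<subseteq> {1..N} \<and> card H = rho})
       (\<lambda>H. map_pmf (\<lambda>W. (H, W)) (pmf_of_set {W. W \<subseteq> {1..N} - H \<and> card W = psi}))"

definition config_pmf :: "nat \<Rightarrow> nat \<Rightarrow> (nat \<Rightarrow> nat) \<Rightarrow> (nat \<Rightarrow> nat) \<Rightarrow> config pmf" where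
  "config_pmf N M rho psi = Pi_pmf {1..M} ({}, {}) (\<lambda>k. receiver_pmf N (rho k) (psi k))"

definition expected_primary_degree ::
  "nat \<Rightarrow> nat \<Rightarrow> (nat \<Rightarrow> nat) \<Rightarrow> (nat \<Rightarrow> nat) \<Rightarrow> nat \<Rightarrow> nat \<Rightarrow> real" where
  "expected_primary_degree N M rho psi i j =
     measure_pmf.expectation (cond_pmf (config_pmf N M rho psi) {c. j \<in> Wants c i})
       (\<lambda>c. real (primary_degree M c (i, j)))"

end

theory Submission
  imports Defs
begin

(*
  The degree of v_ij counts vertices v_kl of the other receivers k \<noteq> i. By C1, v_kj is
  present with probability \<psi>_k/N. By C2, for each of the N - 1 packets l \<noteq> j, v_kl is
  adjacent iff l \<in> H_i and j \<in> H_k, l \<in> W_k. Conditioning on j \<in> W_i only changes the law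
  of receiver i, under which l \<in> H_i has probability \<rho>_i/(N - 1); independently, receiver k
  has j \<in> H_k and l \<in> W_k with probability \<rho>_k \<psi>_k/(N(N - 1)). Linearity of expectation
  sums these contributions.
*)

abbreviation subsets_of_card :: "'a set \<Rightarrow> nat \<Rightarrow> 'a set set" where
  "subsets_of_card A k \<equiv> {S. S \<subseteq> A \<and> card S = k}"

lemma subsets_of_card_nonempty:
  assumes "finite A" "k \<le> card A"
  shows "subsets_of_card A k \<noteq> {}"
  using assms n_subsets[of A k] by (metis card.empty zero_less_binomial_iff not_le less_irrefl)

lemma card_subsets_of_card_containing:
  assumes "finite A" "x \<in> A" "0 < k"
  shows "card {S \<in> subsets_of_card A k. x \<in> S} = (card A - 1) choose (k - 1)"
proof -
  have "{S \<in> subsets_of_card A k. x \<in> S} = insert x ` subsets_of_card (A - {x}) (k - 1)"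
  proof (intro equalityI subsetI)
    fix S assume S: "S \<in> {S \<in> subsets_of_card A k. x \<in> S}"
    then have "card (S - {x}) = k - 1" "S = insert x (S - {x})"
      using assms(1) finite_subset by auto
    then show "S \<in> insert x ` subsets_of_card (A - {x}) (k - 1)" using S by blast
  next
    fix S assume "S \<in> insert x ` subsets_of_card (A - {x}) (k - 1)"
    then obtain T where "T \<subseteq> A - {x}" "card T = k - 1" "S = insert x T" by blast
    moreover have "finite T" "x \<notin> T" using \<open>T \<subseteq> A - {x}\<close> assms(1) finite_subset by auto
    ultimately show "S \<in> {S \<in> subsets_of_card A k. x \<in> S}" using assms(2,3) by auto
  qed
  moreover have "inj_on (insert x) (subsets_of_card (A - {x}) (k - 1))"
    by (rule inj_onI) auto
  ultimately show ?thesis using assms(1,2) by (simp add: card_image n_subsets)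
qed

lemma measure_pmf_of_subsets_mem:
  assumes "finite A" "x \<in> A" "k \<le> card A"
  shows "measure (pmf_of_set (subsets_of_card A k)) {S. x \<in> S} = real k / real (card A)"
proof (cases "k = 0")
  case True
  then have "subsets_of_card A k \<inter> {S. x \<in> S} = {}"
    using assms(1) by (auto dest: finite_subset)
  then show ?thesis
    using True assms by (simp add: measure_pmf_of_set[OF subsets_of_card_nonempty])
next
  case False
  have "k * (card A choose k) = card A * ((card A - 1) choose (k - 1))"
    using False times_binomial_minus1_eq by blast
  then have "real k * real (card A choose k) = real (card A) * real ((card A - 1) choose (k - 1))"
    by (metis of_nat_mult)
  moreover have "card A > 0" "card A choose k > 0" using assms card_gt_0_iff by auto
  ultimately have "real ((card A - 1) choose (k - 1)) / real (card A choose k) = real k / real (card A)"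
    by (simp add: field_simps)
  moreover have "subsets_of_card A k \<inter> {S. x \<in> S} = {S \<in> subsets_of_card A k. x \<in> S}"
    by auto
  ultimately show ?thesis
    using assms card_subsets_of_card_containing[OF assms(1,2)] False
    by (simp add: measure_pmf_of_set[OF subsets_of_card_nonempty] n_subsets)
qed

lemma measure_pmf_of_subsets_avoiding:
  assumes "finite A" "a \<in> A" "k < card A"
  shows "measure (pmf_of_set (subsets_of_card A k)) {S. S \<in> E \<and> a \<notin> S}
    = real (card A - k) / real (card A) * measure (pmf_of_set (subsets_of_card (A - {a}) k)) E"
proof -
  have eq: "subsets_of_card A k \<inter> {S. S \<in> E \<and> a \<notin> S} = subsets_of_card (A - {a}) k \<inter> E"
    by auto
  have "(card A - k) * (card A choose k) = card A * ((card A - 1) choose k)"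
    by (rule binomial_absorb_comp)
  then have "real (card A - k) * real (card A choose k) = real (card A) * real ((card A - 1) choose k)"
    by (metis of_nat_mult)
  moreover have "card A choose k > 0" "(card A - 1) choose k > 0" "card A > 0" using assms by auto
  ultimately have ratio: "real (card A - k) / real (card A) = real ((card A - 1) choose k) / real (card A choose k)"
    by (simp add: field_simps)
  have "finite (A - {a})" "k \<le> card (A - {a})" using assms by auto
  then show ?thesis
    using assms unfolding ratio
    by (simp add: measure_pmf_of_set[OF subsets_of_card_nonempty] eq n_subsets)
qed

lemma measure_bind_pmf:
  "measure (bind_pmf p f) X = measure_pmf.expectation p (\<lambda>x. measure (f x) X)"
  unfolding measure_pmf_bind
  by (rule measure_pmf.measure_bind[where N="count_space UNIV"])
    (auto simp: measure_pmf_in_subprob_algebra)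

lemma measure_cond_pmf:
  assumes "set_pmf p \<inter> s \<noteq> {}"
  shows "measure (cond_pmf p s) B = measure p (s \<inter> B) / measure p s"
proof -
  have "emeasure (measure_pmf p) s \<noteq> 0" by (rule emeasure_measure_pmf_not_zero[OF assms])
  then show ?thesis using cond_pmf.rep_eq[OF assms] measure_uniform_measure[of "measure_pmf p" s B]
    by (simp add: measure_pmf.emeasure_eq_measure)
qed

lemma measure_pair_pmf_Times: "measure (pair_pmf p q) (A \<times> B) = measure p A * measure q B"
proof -
  have "measure (pair_pmf p q) (A \<times> B) = measure (pair_pmf p q) ((A \<times> B) \<inter> set_pmf (pair_pmf p q))"
    by (rule measure_Int_set_pmf[symmetric])
  also have "(A \<times> B) \<inter> set_pmf (pair_pmf p q) = (A \<inter> set_pmf p) \<times> (B \<inter> set_pmf q)" by auto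
  also have "measure (pair_pmf p q) \<dots> = measure p (A \<inter> set_pmf p) * measure q (B \<inter> set_pmf q)"
    by (rule measure_pmf_prob_product) (auto intro: countable_subset[OF _ countable_set_pmf])
  also have "\<dots> = measure p A * measure q B" by (simp add: measure_Int_set_pmf)
  finally show ?thesis .
qed

lemma map_Pi_pmf_two_components:
  assumes "finite A" "i \<in> A" "k \<in> A" "i \<noteq> k"
  shows "map_pmf (\<lambda>c. (c i, c k)) (Pi_pmf A d p) = pair_pmf (p i) (p k)"
proof -
  have A: "A = insert i (A - {i})" using assms by auto
  have "map_pmf (\<lambda>c. (c i, c k)) (Pi_pmf A d p)
      = map_pmf (\<lambda>c. (c i, c k)) (map_pmf (\<lambda>(y, f). f(i := y)) (pair_pmf (p i) (Pi_pmf (A - {i}) d p)))"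
    by (subst A, subst Pi_pmf_insert) (use assms in auto)
  also have "\<dots> = map_pmf (\<lambda>(a, b). (id a, (\<lambda>f. f k) b)) (pair_pmf (p i) (Pi_pmf (A - {i}) d p))"
    unfolding pmf.map_comp using assms(4) by (intro pmf.map_cong refl) auto
  also have "\<dots> = pair_pmf (p i) (p k)"
    unfolding map_pair using assms Pi_pmf_component[of "A - {i}" k d p] by simp
  finally show ?thesis .
qed

lemma cond_Pi_pmf_component:
  assumes A: "finite A" "i \<in> A" and ne: "set_pmf (p i) \<inter> X \<noteq> {}"
  shows "cond_pmf (Pi_pmf A d p) {c. c i \<in> X} = Pi_pmf A d (p(i := cond_pmf (p i) X))"
proof -
  obtain x where x: "x \<in> set_pmf (p i)" "x \<in> X" using ne by blast
  have component: "map_pmf (\<lambda>f. f i) (Pi_pmf A d p) = p i"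
    by (subst Pi_pmf_component[OF A(1)]) (simp add: A(2))
  have measure_event: "measure (Pi_pmf A d p) {c. c i \<in> X} = measure (p i) X"
  proof -
    have "measure (p i) X = measure (map_pmf (\<lambda>f. f i) (Pi_pmf A d p)) X" using component by simp
    also have "\<dots> = measure (Pi_pmf A d p) {c. c i \<in> X}" by (simp add: vimage_def)
    finally show ?thesis by simp
  qed
  have "set_pmf (p i) = (\<lambda>f. f i) ` set_pmf (Pi_pmf A d p)" using component[symmetric] by simp
  with x have ne': "set_pmf (Pi_pmf A d p) \<inter> {c. c i \<in> X} \<noteq> {}" by auto
  have pos: "measure (p i) X > 0" using x by (rule measure_pmf_posI)
  show ?thesis
  proof (rule pmf_eqI)
    fix f
    let ?p' = "p(i := cond_pmf (p i) X)"
    have "(\<Prod>x\<in>A. pmf (p x) (f x)) = pmf (p i) (f i) * (\<Prod>x\<in>A - {i}. pmf (p x) (f x))"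
      using A by (simp add: prod.remove)
    moreover have "(\<Prod>x\<in>A. pmf (?p' x) (f x)) = pmf (cond_pmf (p i) X) (f i) * (\<Prod>x\<in>A - {i}. pmf (p x) (f x))"
      using A by (simp add: prod.remove)
    ultimately show "pmf (cond_pmf (Pi_pmf A d p) {c. c i \<in> X}) f = pmf (Pi_pmf A d ?p') f"
      using ne ne' measure_event pos A by (simp add: pmf_cond pmf_Pi) blast
  qed
qed

lemma wants_subset_lacks_receiver_pmf:
  assumes "rho \<le> N" "psi \<le> N - rho" "x \<in> set_pmf (receiver_pmf N rho psi)"
  shows "snd x \<subseteq> {1..N} - fst x"
proof -
  have "card ({1..N} - H) = N - rho" if "H \<in> subsets_of_card {1..N} rho" for H
    using that by (auto simp: card_Diff_subset finite_subset)
  then show ?thesis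
    using assms subsets_of_card_nonempty[of "{1..N}" rho]
      subsets_of_card_nonempty[of "{1..N} - _" psi]
    by (auto simp: receiver_pmf_def)
qed

text \<open>Given its Has set H, a receiver wants a \<notin> H with probability psi/(N - rho).\<close>
lemma measure_receiver_pmf_has_in_and_wants:
  assumes "rho \<le> N" "psi \<le> N - rho" "a \<in> {1..N}"
  shows "measure (receiver_pmf N rho psi) {x. fst x \<in> E \<and> a \<in> snd x}
    = real psi / real (N - rho) * measure (pmf_of_set (subsets_of_card {1..N} rho)) {H. H \<in> E \<and> a \<notin> H}"
proof -
  let ?c = "real psi / real (N - rho)" and ?B = "{H. H \<in> E \<and> a \<notin> H}"
  have inner: "measure (map_pmf (Pair H) (pmf_of_set (subsets_of_card ({1..N} - H) psi)))
      {x. fst x \<in> E \<and> a \<in> snd x} = ?c * indicator ?B H"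
    if H: "H \<in> subsets_of_card {1..N} rho" for H
  proof -
    have card: "card ({1..N} - H) = N - rho"
      using H by (auto simp: card_Diff_subset finite_subset)
    show ?thesis
    proof (cases "H \<in> ?B")
      case True
      then show ?thesis
        using measure_pmf_of_subsets_mem[of "{1..N} - H" a psi] card assms by (simp add: vimage_def)
    next
      case False
      then have "subsets_of_card ({1..N} - H) psi \<inter> {W. H \<in> E \<and> a \<in> W} = {}"
        by auto
      then show ?thesis
        using False card assms
        by (simp add: vimage_def measure_pmf_of_set[OF subsets_of_card_nonempty])
    qed
  qed
  have "measure (receiver_pmf N rho psi) {x. fst x \<in> E \<and> a \<in> snd x}
      = measure_pmf.expectation (pmf_of_set (subsets_of_card {1..N} rho)) (\<lambda>H. ?c * indicator ?B H)"
    unfolding receiver_pmf_def measure_bind_pmf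
    using assms(1) inner subsets_of_card_nonempty[of "{1..N}" rho]
    by (intro integral_cong_AE) (auto simp: AE_measure_pmf_iff)
  then show ?thesis by simp
qed

lemma measure_receiver_pmf_wants:
  assumes "rho \<le> N" "psi \<le> N - rho" "a \<in> {1..N}"
  shows "measure (receiver_pmf N rho psi) {x. a \<in> snd x} = real psi / real N"
proof (cases "rho = N")
  case True
  then show ?thesis
    using assms measure_receiver_pmf_has_in_and_wants[OF assms, of UNIV] by simp
next
  case False
  then show ?thesis
    using assms measure_receiver_pmf_has_in_and_wants[OF assms, of UNIV]
      measure_pmf_of_subsets_avoiding[of "{1..N}" a rho UNIV]
    by (simp add: of_nat_diff)
qed

lemma measure_receiver_pmf_has_and_wants:
  assumes "rho \<le> N" "psi \<le> N - rho" "a \<in> {1..N}" "b \<in> {1..N}" "a \<noteq> b"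
  shows "measure (receiver_pmf N rho psi) {x. b \<in> fst x \<and> a \<in> snd x}
    = real rho * real psi / (real N * (real N - 1))"
proof (cases "rho = N")
  case True
  then show ?thesis
    using assms measure_receiver_pmf_has_in_and_wants[OF assms(1-3), of "{H. b \<in> H}"] by simp
next
  case False
  have "measure (pmf_of_set (subsets_of_card ({1..N} - {a}) rho)) {H. b \<in> H} = real rho / real (N - 1)"
    using measure_pmf_of_subsets_mem[of "{1..N} - {a}" b rho] assms False by simp
  then show ?thesis
    using assms False measure_receiver_pmf_has_in_and_wants[OF assms(1-3), of "{H. b \<in> H}"]
      measure_pmf_of_subsets_avoiding[of "{1..N}" a rho "{H. b \<in> H}"]
    by (simp add: of_nat_diff)
qed

lemma set_receiver_pmf_wants_nonempty:
  assumes "rho \<le> N" "psi \<le> N - rho" "0 < psi" "a \<in> {1..N}"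
  shows "set_pmf (receiver_pmf N rho psi) \<inter> {x. a \<in> snd x} \<noteq> {}"
proof
  assume "set_pmf (receiver_pmf N rho psi) \<inter> {x. a \<in> snd x} = {}"
  then have "measure (receiver_pmf N rho psi) {x. a \<in> snd x} = 0"
    by (simp add: measure_pmf_zero_iff)
  then show False
    using measure_receiver_pmf_wants[OF assms(1,2,4)] assms(3,4) by simp
qed

lemma measure_cond_receiver_pmf_has:
  assumes "rho \<le> N" "psi \<le> N - rho" "0 < psi" "j \<in> {1..N}" "l \<in> {1..N}" "l \<noteq> j"
  shows "measure (cond_pmf (receiver_pmf N rho psi) {x. j \<in> snd x}) {x. l \<in> fst x}
    = real rho / (real N - 1)"
proof -
  let ?p = "receiver_pmf N rho psi"
  have "measure (cond_pmf ?p {x. j \<in> snd x}) {x. l \<in> fst x}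
      = measure ?p ({x. j \<in> snd x} \<inter> {x. l \<in> fst x}) / measure ?p {x. j \<in> snd x}"
    by (rule measure_cond_pmf[OF set_receiver_pmf_wants_nonempty[OF assms(1-4)]])
  also have "{x. j \<in> snd x} \<inter> {x. l \<in> fst x} = {x. l \<in> fst x \<and> j \<in> snd x}"
    by auto
  also have "measure ?p \<dots> = real rho * real psi / (real N * (real N - 1))"
    using measure_receiver_pmf_has_and_wants assms by simp
  also have "measure ?p {x. j \<in> snd x} = real psi / real N"
    using measure_receiver_pmf_wants assms by simp
  also have "real rho * real psi / (real N * (real N - 1)) / (real psi / real N) = real rho / (real N - 1)"
    using assms by (simp add: field_simps)
  finally show ?thesis .
qed

text \<open>For k \<noteq> i, with ri = (H_i, W_i) and rk = (H_k, W_k), idnc_edge j ri l rk says that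
  v_kl is a vertex adjacent to v_ij.\<close>
definition idnc_edge :: "nat \<Rightarrow> nat set \<times> nat set \<Rightarrow> nat \<Rightarrow> nat set \<times> nat set \<Rightarrow> bool" where
  "idnc_edge j ri l rk \<longleftrightarrow> l \<in> snd rk \<and> (l = j \<or> j \<in> fst rk \<and> l \<in> fst ri)"

text \<open>Receiver i contributes no neighbour: C1 would give v_ij itself, and C2 needs j \<in> H_i.\<close>
lemma primary_degree_eq_sum_card:
  assumes "i \<in> {1..M}" "j \<in> Wants c i"
    and lacks: "\<And>k. k \<in> {1..M} \<Longrightarrow> Wants c k \<subseteq> {1..N} - Has c k"
  shows "primary_degree M c (i, j) = (\<Sum>k\<in>{1..M} - {i}. card {l \<in> {1..N}. idnc_edge j (c i) l (c k)})"
proof -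
  let ?T = "\<lambda>k. {l \<in> {1..N}. idnc_edge j (c i) l (c k)}"
  have "j \<notin> Has c i" using assms(1,2) lacks[of i] by auto
  then have "{u \<in> idnc_vertices M c. idnc_adj c (i, j) u} = (\<Union>k\<in>{1..M} - {i}. {k} \<times> ?T k)"
    using lacks
    by (fastforce simp: idnc_vertices_def idnc_adj_def idnc_edge_def Has_def Wants_def)
  then have "primary_degree M c (i, j) = card (\<Union>k\<in>{1..M} - {i}. {k} \<times> ?T k)"
    by (simp add: primary_degree_def)
  also have "\<dots> = (\<Sum>k\<in>{1..M} - {i}. card ({k} \<times> ?T k))"
    by (rule card_UN_disjoint) auto
  finally show ?thesis by (simp add: card_cartesian_product_singleton)
qed

lemma expectation_primary_degree_cond_Pi_pmf:
  fixes p :: "nat \<Rightarrow> (nat set \<times> nat set) pmf"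
  assumes i: "i \<in> {1..M}"
    and lacks: "\<And>k x. k \<in> {1..M} \<Longrightarrow> x \<in> set_pmf (p k) \<Longrightarrow> snd x \<subseteq> {1..N} - fst x"
    and possible: "set_pmf (p i) \<inter> {x. j \<in> snd x} \<noteq> {}"
  shows "measure_pmf.expectation (cond_pmf (Pi_pmf {1..M} ({}, {}) p) {c. j \<in> Wants c i})
           (\<lambda>c. real (primary_degree M c (i, j)))
    = (\<Sum>k\<in>{1..M} - {i}. \<Sum>l\<in>{1..N}.
         measure (pair_pmf (cond_pmf (p i) {x. j \<in> snd x}) (p k)) {(x, y). idnc_edge j x l y})"
proof -
  define Q where "Q = Pi_pmf {1..M} ({}, {}) (p(i := cond_pmf (p i) {x. j \<in> snd x}))"
  have cond: "cond_pmf (Pi_pmf {1..M} ({}, {}) p) {c. j \<in> Wants c i} = Q"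
    using cond_Pi_pmf_component[of "{1..M}" i p "{x. j \<in> snd x}"] i possible
    by (simp add: Q_def Wants_def)
  have support: "j \<in> Wants c i" "\<And>k. k \<in> {1..M} \<Longrightarrow> Wants c k \<subseteq> {1..N} - Has c k"
    if "c \<in> set_pmf Q" for c
  proof -
    have c: "c k \<in> set_pmf ((p(i := cond_pmf (p i) {x. j \<in> snd x})) k)" if "k \<in> {1..M}" for k
      using \<open>c \<in> set_pmf Q\<close> that by (simp add: Q_def set_Pi_pmf PiE_dflt_def)
    then show "j \<in> Wants c i"
      using c[OF i] set_cond_pmf[OF possible] by (auto simp: Wants_def)
    have "c k \<in> set_pmf (p k)" if "k \<in> {1..M}" for k
      using c[OF that] c[OF i] set_cond_pmf[OF possible] by (cases "k = i") auto
    then show "\<And>k. k \<in> {1..M} \<Longrightarrow> Wants c k \<subseteq> {1..N} - Has c k"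
      using lacks by (simp add: Wants_def Has_def)
  qed
  have "measure_pmf.expectation Q (\<lambda>c. real (primary_degree M c (i, j)))
      = measure_pmf.expectation Q (\<lambda>c. \<Sum>k\<in>{1..M} - {i}. \<Sum>l\<in>{1..N}.
           indicator {c. idnc_edge j (c i) l (c k)} c)"
  proof (intro integral_cong_AE)
    have "real (primary_degree M c (i, j))
        = (\<Sum>k\<in>{1..M} - {i}. \<Sum>l\<in>{1..N}. indicator {c. idnc_edge j (c i) l (c k)} c)"
      if "c \<in> set_pmf Q" for c
      using primary_degree_eq_sum_card[OF i support[OF that]]
      by (simp add: indicator_def of_bool_def[symmetric] Int_def)
    then show "AE c in Q. real (primary_degree M c (i, j))
        = (\<Sum>k\<in>{1..M} - {i}. \<Sum>l\<in>{1..N}. indicator {c. idnc_edge j (c i) l (c k)} c)"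
      by (simp add: AE_measure_pmf_iff)
  qed simp_all
  also have "\<dots> = (\<Sum>k\<in>{1..M} - {i}. \<Sum>l\<in>{1..N}. measure Q {c. idnc_edge j (c i) l (c k)})"
    by (simp add: integral_sum measure_pmf.emeasure_eq_measure)
  also have "\<dots> = (\<Sum>k\<in>{1..M} - {i}. \<Sum>l\<in>{1..N}.
         measure (pair_pmf (cond_pmf (p i) {x. j \<in> snd x}) (p k)) {(x, y). idnc_edge j x l y})"
  proof (intro sum.cong refl)
    fix k l assume "k \<in> {1..M} - {i}"
    then have "map_pmf (\<lambda>c. (c i, c k)) Q = pair_pmf (cond_pmf (p i) {x. j \<in> snd x}) (p k)"
      using map_Pi_pmf_two_components[of "{1..M}" i k "({}, {})" "p(i := cond_pmf (p i) {x. j \<in> snd x})"] i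
      by (auto simp: Q_def)
    moreover have "measure Q {c. idnc_edge j (c i) l (c k)}
      = measure (map_pmf (\<lambda>c. (c i, c k)) Q) {(x, y). idnc_edge j x l y}"
      by (simp add: vimage_def)
    ultimately show "measure Q {c. idnc_edge j (c i) l (c k)}
      = measure (pair_pmf (cond_pmf (p i) {x. j \<in> snd x}) (p k)) {(x, y). idnc_edge j x l y}"
      by simp
  qed
  finally show ?thesis by (simp only: cond)
qed

lemma sum_measure_idnc_edge_receiver_pmf:
  assumes N: "2 \<le> N" and j: "j \<in> {1..N}"
    and i: "rho_i \<le> N" "psi_i \<le> N - rho_i" "0 < psi_i"
    and k: "rho_k \<le> N" "psi_k \<le> N - rho_k"
  shows "(\<Sum>l\<in>{1..N}. measure (pair_pmf (cond_pmf (receiver_pmf N rho_i psi_i) {x. j \<in> snd x})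
                                      (receiver_pmf N rho_k psi_k)) {(x, y). idnc_edge j x l y})
    = real psi_k / real N * (1 + real rho_k * real rho_i / (real N - 1))"
proof -
  let ?q = "cond_pmf (receiver_pmf N rho_i psi_i) {x. j \<in> snd x}"
  let ?P = "\<lambda>l. measure (pair_pmf ?q (receiver_pmf N rho_k psi_k)) {(x, y). idnc_edge j x l y}"
  let ?c = "real rho_i / (real N - 1) * (real rho_k * real psi_k / (real N * (real N - 1)))"
  have "{(x, y). idnc_edge j x j y} = UNIV \<times> {y. j \<in> snd y}"
    by (auto simp: idnc_edge_def)
  then have same: "?P j = real psi_k / real N"
    using measure_receiver_pmf_wants[OF k j] by (simp add: measure_pair_pmf_Times)
  have other: "?P l = ?c" if l: "l \<in> {1..N} - {j}" for l
  proof -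
    have "{(x, y). idnc_edge j x l y} = {x. l \<in> fst x} \<times> {y. j \<in> fst y \<and> l \<in> snd y}"
      using l by (auto simp: idnc_edge_def)
    then show ?thesis
      using measure_cond_receiver_pmf_has[OF i j, of l] measure_receiver_pmf_has_and_wants[OF k, of l j]
        l j by (simp add: measure_pair_pmf_Times)
  qed
  have "(\<Sum>l\<in>{1..N}. ?P l) = ?P j + (\<Sum>l\<in>{1..N} - {j}. ?P l)"
    using j by (simp add: sum.remove)
  also have "\<dots> = real psi_k / real N + (real N - 1) * ?c"
    using same other j by (simp add: of_nat_diff)
  also have "(real N - 1) * ?c = real rho_i * real rho_k * real psi_k / (real N * (real N - 1))"
    using N by simp
  also have "real psi_k / real N + \<dots> = real psi_k / real N * (1 + real rho_k * real rho_i / (real N - 1))"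
  proof -
    have "real N - 1 > 0" using N by simp
    then show ?thesis by (simp add: field_simps)
  qed
  finally show ?thesis .
qed

theorem theorem6:
  fixes N M :: nat and rho psi :: "nat \<Rightarrow> nat" and i j :: nat
  assumes "N \<ge> 2"
    and "\<And>k. k \<in> {1..M} \<Longrightarrow> rho k \<le> N"
    and "\<And>k. k \<in> {1..M} \<Longrightarrow> psi k \<le> N - rho k"
    and "i \<in> {1..M}" and "psi i \<ge> 1"
    and "j \<in> {1..N}"
  shows "expected_primary_degree N M rho psi i j =
    (\<Sum>k\<in>{1..M} - {i}. real (psi k) / real N *
       (1 + real (rho k) * real (rho i) / (real N - 1)))"
proof -
  let ?p = "\<lambda>k. receiver_pmf N (rho k) (psi k)"
  have "expected_primary_degree N M rho psi i j
      = (\<Sum>k\<in>{1..M} - {i}. \<Sum>l\<in>{1..N}.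
           measure (pair_pmf (cond_pmf (?p i) {x. j \<in> snd x}) (?p k)) {(x, y). idnc_edge j x l y})"
    unfolding expected_primary_degree_def config_pmf_def
  proof (rule expectation_primary_degree_cond_Pi_pmf)
    fix k x assume "k \<in> {1..M}" "x \<in> set_pmf (?p k)"
    then show "snd x \<subseteq> {1..N} - fst x"
      using assms by (intro wants_subset_lacks_receiver_pmf[of "rho k" N "psi k"]) auto
  next
    show "set_pmf (?p i) \<inter> {x. j \<in> snd x} \<noteq> {}"
      using assms by (intro set_receiver_pmf_wants_nonempty) auto
  qed (use assms in auto)
  also have "\<dots> = (\<Sum>k\<in>{1..M} - {i}. real (psi k) / real N *
       (1 + real (rho k) * real (rho i) / (real N - 1)))"
    using assms by (intro sum.cong refl sum_measure_idnc_edge_receiver_pmf) auto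
  finally show ?thesis .
qed

end
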